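(* Let $f:[0,\infty)\to\mathbb{R}$ be convex with $f(1)=0$, let $Q$ be a Borel probability measure on $\mathcal{M}$, let $\lambda>0$, and fix a dataset $z$. (i) Assume (a) and (b). Then the optimization problem $$\min_{P\in\triangle_Q(\mathcal{M})}\; R_z(P)+\lambda D_f(P\|Q)$$ has a unique solution, denoted $P^{(Q,\lambda)}_{\Theta|Z=z}\in\triangle_Q(\mathcal{M})$. For all $\theta\in\operatorname{supp}Q$ it satisfies $$\frac{dP^{(Q,\lambda)}_{\Theta|Z=z}}{dQ}(\theta)=\dot f^{-1}\!\Big(-\frac{\beta+L_z(\theta)}{\lambda}\Big),$$ where $\beta$ is the real number in assumption (b). (ii) Assume (a), (b) and (c), and let $\eta\in[0,\infty)$ be such that $D_f\big(P^{(Q,\lambda)}_{\Theta|Z=z}\,\|\,Q\big)=\eta$. Then $P^{(Q,\lambda)}_{\Theta|Z=z}$ is also the unique solution to $$\min_{P\in\triangle_Q(\mathcal{M})} R_z(P)\quad\text{subject to}\quad D_f(P\|Q)\le\eta .$$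
   Context: Setting. - $\mathcal{M}\subseteq\mathbb{R}^d$ is a set of models; $\mathcal{X},\mathcal{Y}$ are sets of patterns and labels; $h:\mathcal{M}\times\mathcal{X}\to\mathcal{Y}$. - The loss $\ell:\mathcal{Y}\times\mathcal{Y}\to[0,\infty)$ satisfies $\ell(y,y)=0$ for all $y$. - For a dataset $z=((x_1,y_1),\dots,(x_n,y_n))\in(\mathcal{X}\times\mathcal{Y})^n$, the empirical risk is $L_z(\theta)=\frac1n\sum_{i=1}^n\ell(h(\theta,x_i),y_i)$. - For a Borel probability measure $P$ on $\mathcal{M}$, $R_z(P)=\int L_z(\theta)\,dP(\theta)$. - $\triangle(\mathcal{M})$ is the set of Borel probability measures on $\mathcal{M}$, and $\triangle_Q(\mathcal{M})=\{P\in\triangle(\mathcal{M}):P\ll Q\}$. $f$-divergence. For convex $f:[0,\infty)\to\mathbb{R}$ with $f(1)=0$ and $f(0)=\lim_{x\to0^+}f(x)$, the $f$-divergence is $D_f(P\|Q)=\int f\big(\frac{dP}{dQ}(\theta)\big)\,dQ(\theta)$ for $P\ll Q$. If $f$ is differentiable, $\dot f:(0,\infty)\to\mathbb{R}$ denotes its derivative and $\dot f^{-1}$ the inverse function of $\dot f$. Assumptions. - (a) $f$ is strictly convex and differentiable. - (b) There exists $\beta\in\mathbb{R}$ such that $0<\dot f^{-1}\big(-\frac{\beta+L_z(\theta)}{\lambda}\big)$ for all $\theta\in\operatorname{supp}Q$, and $\int\dot f^{-1}\big(-\frac{\beta+L_z(\theta)}{\lambda}\big)\,dQ(\theta)=1$.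 - (c) $L_z$ is separable with respect to $Q$: there exist $c>0$ and two subsets $\mathcal{M}_1,\mathcal{M}_2\subseteq\mathcal{M}$ with positive $Q$-measure such that $L_z(\theta_1)<c<L_z(\theta_2)<\infty$ for all $(\theta_1,\theta_2)\in\mathcal{M}_1\times\mathcal{M}_2$. *)

theory Defs
  imports "HOL-Probability.Probability"
begin

definition emp_risk ::
  "('y \<Rightarrow> 'y \<Rightarrow> real) \<Rightarrow> ('m \<Rightarrow> 'x \<Rightarrow> 'y) \<Rightarrow> ('x \<times> 'y) list \<Rightarrow> 'm \<Rightarrow> real" where
  "emp_risk ell h z theta =
     (1 / real (length z)) * (\<Sum>i<length z. ell (h theta (fst (z ! i))) (snd (z ! i)))"

text \<open>Expected empirical risk R_z(P) = integral of L_z w.r.t. P (L_z is nonnegative).\<close>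
definition exp_risk ::
  "('y \<Rightarrow> 'y \<Rightarrow> real) \<Rightarrow> ('m \<Rightarrow> 'x \<Rightarrow> 'y) \<Rightarrow> ('x \<times> 'y) list \<Rightarrow> 'm measure \<Rightarrow> ereal" where
  "exp_risk ell h z P = enn2ereal (\<integral>\<^sup>+ theta. ennreal (emp_risk ell h z theta) \<partial>P)"

definition DeltaQ :: "'m measure \<Rightarrow> 'm measure set" where
  "DeltaQ Q = {P. prob_space P \<and> sets P = sets Q \<and> absolutely_continuous Q P}"

text \<open>f-divergence D_f(P||Q) = integral of f(dP/dQ) dQ, as an extended real
  (positive part minus negative part).\<close>
definition fdiv :: "(real \<Rightarrow> real) \<Rightarrow> 'm measure \<Rightarrow> 'm measure \<Rightarrow> ereal" where
  "fdiv f P Q =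
     enn2ereal (\<integral>\<^sup>+ theta. ennreal (f (enn2real (RN_deriv Q P theta))) \<partial>Q)
   - enn2ereal (\<integral>\<^sup>+ theta. ennreal (- f (enn2real (RN_deriv Q P theta))) \<partial>Q)"

definition msupp :: "'m::topological_space measure \<Rightarrow> 'm set" where
  "msupp Q = {x \<in> space Q. \<forall>U. open U \<and> x \<in> U \<longrightarrow> emeasure Q (U \<inter> space Q) > 0}"

definition strict_convex_on :: "real set \<Rightarrow> (real \<Rightarrow> real) \<Rightarrow> bool" where
  "strict_convex_on S f \<longleftrightarrow> convex S \<and>
    (\<forall>x\<in>S. \<forall>y\<in>S. \<forall>u. x \<noteq> y \<and> 0 < u \<and> u < 1 \<longrightarrow>
        f (u * x + (1 - u) * y) < u * f x + (1 - u) * f y)"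

definition fdot_inv :: "(real \<Rightarrow> real) \<Rightarrow> real \<Rightarrow> real" where
  "fdot_inv f = inv_into {0<..} (deriv f)"

end

theory Submission
  imports Defs
begin

text \<open>
  Let \<open>q\<close> be the density given by assumption (b), so that \<open>lam * f'(q) = - (beta + L)\<close> on the
  support of \<open>Q\<close>.  For any other density \<open>p\<close>, the tangent inequality of the strictly convex
  \<open>f\<close> at \<open>q\<close> gives pointwise
    \<open>(beta + L) * q + lam * f(q) \<le> (beta + L) * p + lam * f(p)\<close>,
  strictly where \<open>p \<noteq> q\<close>.  Integrating against \<open>Q\<close>, the \<open>beta\<close>-terms cancel because both
  densities integrate to \<open>1\<close> (\<open>beta\<close> is the Lagrange multiplier of the normalization), so the
  measure with density \<open>q\<close> minimizes \<open>R_z + lam * D_f\<close>, and every other minimizer has the same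
  density \<open>Q\<close>-a.e.  The integrals of \<open>p L\<close> and of the positive part of \<open>f(p)\<close> may be infinite,
  but that of the negative part is finite since \<open>f\<close> lies above an affine function; this is why
  objectives are compared as sums of nonnegative integrals.  Part (ii) follows from (i): if
  \<open>D_f(P||Q) \<le> eta = D_f(P*||Q)\<close> then \<open>R_z(P*) + lam * eta \<le> R_z(P) + lam * D_f(P||Q) \<le> R_z(P) + lam * eta\<close>.
\<close>

lemma strict_convex_on_imp_convex_on:
  assumes "strict_convex_on S f"
  shows "convex_on S f"
proof (rule convex_on_linorderI)
  show "convex S" using assms by (simp add: strict_convex_on_def)
  fix t x y :: real
  assume "0 < t" "t < 1" "x \<in> S" "y \<in> S" "x < y"
  then show "f ((1 - t) *\<^sub>R x + t *\<^sub>R y) \<le> (1 - t) * f x + t * f y"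
    using assms unfolding strict_convex_on_def by (smt (verit) real_scaleR_def)
qed

lemma nn_integral_bounded_finite:
  assumes "prob_space M" "\<And>t. u t \<le> c"
  shows "(\<integral>\<^sup>+ t. ennreal (u t) \<partial>M) < \<infinity>"
proof -
  interpret prob_space M by fact
  have "(\<integral>\<^sup>+ t. ennreal (u t) \<partial>M) \<le> (\<integral>\<^sup>+ t. ennreal c \<partial>M)"
    using assms(2) by (intro nn_integral_mono ennreal_leI)
  then show ?thesis by (simp add: emeasure_space_1 order_le_less_trans)
qed

lemma exists_sublevel_set_not_null:
  fixes L :: "'a \<Rightarrow> real"
  assumes "prob_space M" "L \<in> borel_measurable M"
  obtains n :: nat where "{t \<in> space M. L t \<le> real n} \<notin> null_sets M"
proof (rule ccontr)
  interpret prob_space M by fact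
  assume "\<not> thesis"
  with that have "{t \<in> space M. L t \<le> real n} \<in> null_sets M" for n
    by blast
  then have "(\<Union>n. {t \<in> space M. L t \<le> real n}) \<in> null_sets M"
    by (rule null_sets_UN)
  moreover have "(\<Union>n. {t \<in> space M. L t \<le> real n}) = space M"
    by (auto intro: real_nat_ceiling_ge)
  ultimately show False
    by (simp add: null_sets_def emeasure_space_1)
qed

lemma DeltaQ_RN_density:
  assumes "prob_space Q" "P \<in> DeltaQ Q"
  defines "p \<equiv> \<lambda>t. enn2real (RN_deriv Q P t)"
  shows "P = density Q (\<lambda>t. ennreal (p t))"
    and "p \<in> borel_measurable Q" "\<And>t. 0 \<le> p t" "(\<integral>\<^sup>+ t. ennreal (p t) \<partial>Q) = 1"
proof -
  interpret Q: prob_space Q by fact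
  have P: "prob_space P" "sets P = sets Q" "absolutely_continuous Q P"
    using assms(2) by (auto simp: DeltaQ_def)
  show p_meas: "p \<in> borel_measurable Q" and "0 \<le> p t" for t
    unfolding p_def by auto
  have "AE t in Q. RN_deriv Q P t \<noteq> \<infinity>"
    using P by (intro Q.RN_deriv_finite prob_space_imp_sigma_finite)
  then have "density Q (RN_deriv Q P) = density Q (\<lambda>t. ennreal (p t))"
    unfolding p_def by (intro density_cong) (auto elim!: eventually_mono simp: ennreal_enn2real_if)
  then show P_eq: "P = density Q (\<lambda>t. ennreal (p t))"
    using Q.density_RN_deriv[OF P(3,2)] by simp
  have "1 = emeasure (density Q (\<lambda>t. ennreal (p t))) (space Q)"
    using prob_space.emeasure_space_1[OF P(1)] sets_eq_imp_space_eq[OF P(2)] P_eq by simp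
  also have "\<dots> = (\<integral>\<^sup>+ t. ennreal (p t) \<partial>Q)"
    using p_meas by (subst emeasure_density) (auto intro!: nn_integral_cong)
  finally show "(\<integral>\<^sup>+ t. ennreal (p t) \<partial>Q) = 1" ..
qed

lemma density_in_DeltaQ:
  assumes "q \<in> borel_measurable Q" "(\<integral>\<^sup>+ t. ennreal (q t) \<partial>Q) = 1"
  shows "density Q (\<lambda>t. ennreal (q t)) \<in> DeltaQ Q"
proof -
  have "emeasure (density Q (\<lambda>t. ennreal (q t))) (space Q) = (\<integral>\<^sup>+ t. ennreal (q t) \<partial>Q)"
    using assms(1) by (subst emeasure_density) (auto intro!: nn_integral_cong)
  then have "prob_space (density Q (\<lambda>t. ennreal (q t)))"
    using assms(2) by (intro prob_spaceI) simp
  then show ?thesis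
    using assms(1) unfolding DeltaQ_def by (simp add: absolutely_continuousI_density)
qed

lemma AE_enn2real_RN_deriv_density:
  assumes "sigma_finite_measure Q" "q \<in> borel_measurable Q" "\<And>t. 0 \<le> q t"
  shows "AE t in Q. enn2real (RN_deriv Q (density Q (\<lambda>t. ennreal (q t))) t) = q t"
proof -
  have "AE t in Q. ennreal (q t) = RN_deriv Q (density Q (\<lambda>t. ennreal (q t))) t"
    using assms(1,2) by (intro sigma_finite_measure.RN_deriv_unique) auto
  then show ?thesis
    by eventually_elim (metis enn2real_ennreal assms(3))
qed

lemma enn2ereal_add_scaled_diff:
  fixes A B N :: ennreal
  assumes "0 \<le> c" "N < \<infinity>"
  shows "enn2ereal A + ereal c * (enn2ereal B - enn2ereal N)
    = enn2ereal (A + ennreal c * B) - enn2ereal (ennreal c * N)"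
proof -
  obtain n where N: "N = ennreal n" "0 \<le> n"
    using assms by (auto simp: less_top_ennreal)
  show ?thesis
  proof (cases A; cases B)
    fix a b assume "0 \<le> a" "A = ennreal a" "0 \<le> b" "B = ennreal b"
    then show ?thesis using N assms(1) by (simp add: algebra_simps flip: ennreal_plus ennreal_mult)
  qed (use N assms(1) in \<open>auto simp: ennreal_mult_top zero_ennreal.rep_eq\<close>)
qed

lemma enn2ereal_diff_le_iff:
  fixes A A' N N' :: ennreal
  assumes "N < \<infinity>" "N' < \<infinity>"
  shows "enn2ereal A - enn2ereal N \<le> enn2ereal A' - enn2ereal N' \<longleftrightarrow> A + N' \<le> A' + N"
proof -
  obtain n n' where N: "N = ennreal n" "0 \<le> n" and N': "N' = ennreal n'" "0 \<le> n'"
    using assms by (auto simp: less_top_ennreal)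
  show ?thesis
  proof (cases A; cases A')
    fix a a' assume "0 \<le> a" "A = ennreal a" "0 \<le> a'" "A' = ennreal a'"
    then show ?thesis using N N' by (simp flip: ennreal_plus) arith
  qed (use N N' in \<open>auto simp: top_unique simp flip: ennreal_plus\<close>)
qed

lemma null_sets_compl_msupp:
  fixes Q :: "'m::second_countable_topology measure"
  assumes Q_sets: "sets Q = sets (restrict_space borel Ms)"
  shows "space Q - msupp Q \<in> null_sets Q"
proof -
  have open_sets: "U \<inter> space Q \<in> sets Q" if "open U" for U
    using that Q_sets sets_eq_imp_space_eq[OF Q_sets]
    by (auto simp: sets_restrict_space space_restrict_space Int_commute)
  define F where "F = {U. open U \<and> emeasure Q (U \<inter> space Q) = 0}"
  obtain F' where F': "F' \<subseteq> F" "countable F'" "\<Union>F' = \<Union>F"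
    using Lindelof[of F] unfolding F_def by blast
  have "space Q - msupp Q = (\<Union>U\<in>F'. U \<inter> space Q)"
    using F'(3) unfolding msupp_def F_def by (auto simp: not_gr_zero)
  also have "\<dots> \<in> null_sets Q"
    using F'(1,2) open_sets unfolding F_def by (intro null_sets_UN') auto
  finally show ?thesis .
qed

lemma msupp_in_sets:
  fixes Q :: "'m::second_countable_topology measure"
  assumes "sets Q = sets (restrict_space borel Ms)"
  shows "msupp Q \<in> sets Q"
proof -
  have "msupp Q = space Q - (space Q - msupp Q)" by (auto simp: msupp_def)
  then show ?thesis using null_sets_compl_msupp[OF assms] by (metis null_setsD2 sets.compl_sets)
qed

lemma AE_in_msupp:
  fixes Q :: "'m::second_countable_topology measure"
  assumes "sets Q = sets (restrict_space borel Ms)"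
  shows "AE t in Q. t \<in> msupp Q"
  using null_sets_compl_msupp[OF assms] by (rule AE_I') auto

lemma penalized_minimizer_solves_constrained:
  fixes R D :: "'a \<Rightarrow> ereal"
  assumes lam: "0 < lam" and eta: "D x = ereal eta"
    and min: "\<And>y. y \<in> A \<Longrightarrow> R x + ereal lam * D x \<le> R y + ereal lam * D y"
    and uniq: "\<And>y. y \<in> A \<Longrightarrow> R y + ereal lam * D y \<le> R x + ereal lam * D x \<Longrightarrow> y = x"
    and y: "y \<in> A" "D y \<le> ereal eta"
  shows "R x \<le> R y" and "R y \<le> R x \<Longrightarrow> y = x"
proof -
  have penalty: "ereal lam * D y \<le> ereal lam * D x"
    using y(2) lam eta by (intro ereal_mult_left_mono) auto
  have "R x + ereal lam * D x \<le> R y + ereal lam * D x"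
    using min[OF y(1)] add_left_mono[OF penalty] by (rule order.trans)
  then show "R x \<le> R y" using eta by (simp add: ereal_add_le_add_iff2)
  assume "R y \<le> R x"
  then have "R y + ereal lam * D y \<le> R x + ereal lam * D x" using penalty by (rule add_mono)
  then show "y = x" by (rule uniq[OF y(1)])
qed

locale strictly_convex_generator =
  fixes f :: "real \<Rightarrow> real"
  assumes strictly_convex: "strict_convex_on {0..} f"
    and differentiable: "\<And>x. 0 < x \<Longrightarrow> f differentiable (at x)"
begin

lemma tangent_le:
  assumes "0 < y" "0 \<le> x"
  shows "f y + deriv f y * (x - y) \<le> f x"
proof -
  have "(f has_real_derivative deriv f y) (at y within {0..})"
    using differentiable[OF \<open>0 < y\<close>] DERIV_deriv_iff_real_differentiable has_field_derivative_at_within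
    by blast
  then have "deriv f y * (x - y) \<le> f x - f y"
    using strict_convex_on_imp_convex_on[OF strictly_convex] assms
    by (intro convex_on_imp_above_tangent) (auto simp: is_interval_connected)
  then show ?thesis by simp
qed

lemma tangent_less:
  assumes "0 < y" "0 \<le> x" "x \<noteq> y"
  shows "f y + deriv f y * (x - y) < f x"
proof -
  define m where "m = (1/2) * x + (1 - 1/2) * y"
  have "\<forall>x\<in>{0..}. \<forall>y\<in>{0..}. \<forall>u. x \<noteq> y \<and> 0 < u \<and> u < 1 \<longrightarrow>
      f (u * x + (1 - u) * y) < u * f x + (1 - u) * f y"
    using strictly_convex unfolding strict_convex_on_def by blast
  from this[rule_format, of x y "1/2"] have "f m < (1/2) * f x + (1 - 1/2) * f y"
    unfolding m_def using assms by simp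
  moreover have "f y + deriv f y * (m - y) \<le> f m"
    using assms by (intro tangent_le) (auto simp: m_def)
  ultimately show ?thesis by (simp add: m_def algebra_simps)
qed

lemma deriv_strict_mono:
  assumes "0 < x" "x < y"
  shows "deriv f x < deriv f y"
proof -
  have "f x + deriv f x * (y - x) < f y" "f y + deriv f y * (x - y) < f x"
    using assms by (auto intro!: tangent_less)
  then have "(deriv f y - deriv f x) * (y - x) > 0" by (simp add: algebra_simps)
  with assms show ?thesis by (simp add: zero_less_mult_iff)
qed

lemma deriv_less_iff:
  assumes "0 < x" "0 < y"
  shows "deriv f x < deriv f y \<longleftrightarrow> x < y"
  using assms deriv_strict_mono by (metis linorder_neq_iff order_less_asym)

lemma neg_le_affine:
  assumes "0 \<le> x"
  shows "- f x \<le> (\<bar>f 1\<bar> + \<bar>deriv f 1\<bar>) * (1 + x)"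
proof -
  have "f 1 + deriv f 1 * (x - 1) \<le> f x" using assms by (intro tangent_le) auto
  moreover have "- deriv f 1 * x \<le> \<bar>deriv f 1\<bar> * x"
    using assms by (intro mult_right_mono) auto
  moreover have "0 \<le> \<bar>f 1\<bar> * x"
    using assms by simp
  ultimately show ?thesis by (simp add: algebra_simps)
qed

lemma deriv_root_minimizes:
  assumes "0 < lam" "0 < y" "0 \<le> x" "deriv f y = - c / lam"
  shows "c * y + lam * f y \<le> c * x + lam * f x"
    and "x \<noteq> y \<Longrightarrow> c * y + lam * f y < c * x + lam * f x"
proof -
  have "lam * deriv f y = - c"
    using assms by simp
  then have slope: "lam * (deriv f y * (x - y)) = c * (y - x)"
    by (simp only: mult.assoc[symmetric]) (simp add: algebra_simps)
  have "lam * (f y + deriv f y * (x - y)) \<le> lam * f x"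
    using assms(1) tangent_le[OF assms(2,3)] by simp
  then show "c * y + lam * f y \<le> c * x + lam * f x"
    using slope by (simp add: algebra_simps)
  assume "x \<noteq> y"
  then have "lam * (f y + deriv f y * (x - y)) < lam * f x"
    using assms(1) tangent_less[OF assms(2,3)] by simp
  then show "c * y + lam * f y < c * x + lam * f x"
    using slope by (simp add: algebra_simps)
qed

lemma borel_measurable_f_comp:
  assumes p: "p \<in> borel_measurable M" and p_nonneg: "\<And>t. 0 \<le> p t"
  shows "(\<lambda>t. f (p t)) \<in> borel_measurable M"
proof -
  have "continuous_on {0<..} f"
    by (intro continuous_at_imp_continuous_on ballI differentiable_imp_continuous_within differentiable)
      auto
  then have "(\<lambda>x. indicator {0<..} x *\<^sub>R f x) \<in> borel_measurable borel"
    by (intro borel_measurable_continuous_on_indicator) auto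
  then have "(\<lambda>x. indicator {0<..} x *\<^sub>R f x + indicator {..0} x *\<^sub>R f 0) \<in> borel_measurable borel"
    by measurable
  from measurable_compose[OF p this] show ?thesis
    by (rule measurable_cong[THEN iffD1, rotated])
      (use p_nonneg in \<open>auto simp: indicator_def order.order_iff_strict\<close>)
qed

text \<open>The objective \<open>\<integral> p L + lam * \<integral> f \<circ> p\<close> of a density \<open>p\<close> is represented as
  \<open>objective_pos - lam * objective_neg\<close>, where only the positive part can be infinite.\<close>

definition objective_pos :: "('a \<Rightarrow> real) \<Rightarrow> real \<Rightarrow> 'a measure \<Rightarrow> ('a \<Rightarrow> real) \<Rightarrow> ennreal"
  where "objective_pos L lam M p =
    (\<integral>\<^sup>+ t. ennreal (p t * L t) \<partial>M) + ennreal lam * (\<integral>\<^sup>+ t. ennreal (f (p t)) \<partial>M)"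

definition objective_neg :: "'a measure \<Rightarrow> ('a \<Rightarrow> real) \<Rightarrow> ennreal"
  where "objective_neg M p = (\<integral>\<^sup>+ t. ennreal (- f (p t)) \<partial>M)"

lemma objective_neg_finite:
  assumes "prob_space M"
    and "p \<in> borel_measurable M" "\<And>t. 0 \<le> p t" "(\<integral>\<^sup>+ t. ennreal (p t) \<partial>M) = 1"
  shows "objective_neg M p < \<infinity>"
proof -
  interpret prob_space M by fact
  define C where "C = \<bar>f 1\<bar> + \<bar>deriv f 1\<bar>"
  have "ennreal (- f (p t)) \<le> ennreal C * (1 + ennreal (p t))" for t
  proof -
    have "ennreal (- f (p t)) \<le> ennreal (C * (1 + p t))"
      unfolding C_def using assms(3) by (intro ennreal_leI neg_le_affine)
    also have "\<dots> = ennreal C * (1 + ennreal (p t))"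
      using assms(3) by (simp add: C_def ennreal_mult')
    finally show ?thesis .
  qed
  then have "objective_neg M p \<le> (\<integral>\<^sup>+ t. ennreal C * (1 + ennreal (p t)) \<partial>M)"
    unfolding objective_neg_def by (intro nn_integral_mono)
  also have "\<dots> = ennreal C * 2"
    using assms by (simp add: nn_integral_cmult nn_integral_add emeasure_space_1 one_add_one)
  finally show ?thesis by (simp add: order_le_less_trans ennreal_mult_less_top)
qed

text \<open>Comparing the pointwise Lagrangian \<open>(beta + L) * p + lam * f \<circ> p\<close> at \<open>p\<close> and at \<open>q\<close>,
  with all negative parts moved to the other side, gives these nonnegative integrands
  (\<open>split_integrand_diff\<close>).\<close>

definition split_integrand ::
  "('a \<Rightarrow> real) \<Rightarrow> real \<Rightarrow> real \<Rightarrow> ('a \<Rightarrow> real) \<Rightarrow> ('a \<Rightarrow> real) \<Rightarrow> 'a \<Rightarrow> real"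
  where "split_integrand L lam beta p q t =
    p t * L t + lam * max (f (p t)) 0 + lam * max (- f (q t)) 0
    + max beta 0 * p t + max (- beta) 0 * q t"

lemma split_integrand_diff:
  "split_integrand L lam beta p q t - split_integrand L lam beta q p t
    = ((beta + L t) * p t + lam * f (p t)) - ((beta + L t) * q t + lam * f (q t))"
proof -
  have "max x 0 - max (- x) 0 = x" for x :: real by (simp add: max_def)
  from this[of "f (p t)"] this[of "f (q t)"] this[of beta] show ?thesis
    unfolding split_integrand_def by (simp add: algebra_simps)
qed

lemma split_integrand_nonneg:
  "0 \<le> L t \<Longrightarrow> 0 \<le> lam \<Longrightarrow> 0 \<le> p t \<Longrightarrow> 0 \<le> q t \<Longrightarrow> 0 \<le> split_integrand L lam beta p q t"
  unfolding split_integrand_def by simp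

lemma borel_measurable_split_integrand:
  assumes "L \<in> borel_measurable M"
    and "p \<in> borel_measurable M" "\<And>t. 0 \<le> p t" "q \<in> borel_measurable M" "\<And>t. 0 \<le> q t"
  shows "split_integrand L lam beta p q \<in> borel_measurable M"
  using assms borel_measurable_f_comp[of p M] borel_measurable_f_comp[of q M]
  unfolding split_integrand_def[abs_def] by measurable

lemma nn_integral_split_integrand:
  assumes "L \<in> borel_measurable M" "\<And>t. 0 \<le> L t" "0 \<le> lam"
    and p: "p \<in> borel_measurable M" "\<And>t. 0 \<le> p t" "(\<integral>\<^sup>+ t. ennreal (p t) \<partial>M) = 1"
    and q: "q \<in> borel_measurable M" "\<And>t. 0 \<le> q t" "(\<integral>\<^sup>+ t. ennreal (q t) \<partial>M) = 1"
  shows "(\<integral>\<^sup>+ t. ennreal (split_integrand L lam beta p q t) \<partial>M)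
    = objective_pos L lam M p + ennreal lam * objective_neg M q + ennreal \<bar>beta\<bar>"
proof -
  have max0: "ennreal (max x 0) = ennreal x" for x by (simp add: max_def ennreal_neg)
  have "ennreal (split_integrand L lam beta p q t) =
      ennreal (p t * L t) + ennreal lam * ennreal (f (p t)) + ennreal lam * ennreal (- f (q t))
      + ennreal (max beta 0) * ennreal (p t) + ennreal (max (- beta) 0) * ennreal (q t)" for t
    using assms by (simp add: split_integrand_def ennreal_mult' max0)
  moreover have "ennreal (max beta 0) + ennreal (max (- beta) 0) = ennreal \<bar>beta\<bar>"
    by (simp add: max_def ennreal_neg)
  ultimately show ?thesis
    using assms borel_measurable_f_comp[OF p(1,2)] borel_measurable_f_comp[OF q(1,2)]
    by (simp add: objective_pos_def objective_neg_def nn_integral_add nn_integral_cmult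
        distrib_left[symmetric] ac_simps)
qed

lemma split_integrand_le_at_root:
  assumes "0 < lam" "0 \<le> p t" "0 < q t" "deriv f (q t) = - (beta + L t) / lam"
  shows "split_integrand L lam beta q p t \<le> split_integrand L lam beta p q t"
    and "p t \<noteq> q t \<Longrightarrow> split_integrand L lam beta q p t < split_integrand L lam beta p q t"
  using deriv_root_minimizes[OF assms(1,3,2,4)] split_integrand_diff[of L lam beta p q t]
  by simp_all

lemma objective_le_at_root:
  assumes lam: "0 < lam"
    and L: "L \<in> borel_measurable M" "\<And>t. 0 \<le> L t"
    and p: "p \<in> borel_measurable M" "\<And>t. 0 \<le> p t" "(\<integral>\<^sup>+ t. ennreal (p t) \<partial>M) = 1"
    and q: "q \<in> borel_measurable M" "\<And>t. 0 \<le> q t" "(\<integral>\<^sup>+ t. ennreal (q t) \<partial>M) = 1"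
    and q_root: "AE t in M. 0 < q t \<and> deriv f (q t) = - (beta + L t) / lam"
  shows "objective_pos L lam M q + ennreal lam * objective_neg M p
      \<le> objective_pos L lam M p + ennreal lam * objective_neg M q"
proof -
  have "AE t in M. ennreal (split_integrand L lam beta q p t) \<le> ennreal (split_integrand L lam beta p q t)"
    using q_root by eventually_elim (auto intro!: ennreal_leI split_integrand_le_at_root lam p(2))
  then have "(\<integral>\<^sup>+ t. ennreal (split_integrand L lam beta q p t) \<partial>M)
      \<le> (\<integral>\<^sup>+ t. ennreal (split_integrand L lam beta p q t) \<partial>M)"
    by (rule nn_integral_mono_AE)
  then show ?thesis
    unfolding nn_integral_split_integrand[OF L less_imp_le[OF lam] p q]
      nn_integral_split_integrand[OF L less_imp_le[OF lam] q p]
    by (simp add: ennreal_add_left_cancel_le add.commute[of _ "ennreal \<bar>beta\<bar>"])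
qed

lemma objective_eq_at_root_imp_AE_eq:
  assumes M: "prob_space M" and lam: "0 < lam"
    and L: "L \<in> borel_measurable M" "\<And>t. 0 \<le> L t"
    and p: "p \<in> borel_measurable M" "\<And>t. 0 \<le> p t" "(\<integral>\<^sup>+ t. ennreal (p t) \<partial>M) = 1"
    and q: "q \<in> borel_measurable M" "\<And>t. 0 \<le> q t" "(\<integral>\<^sup>+ t. ennreal (q t) \<partial>M) = 1"
    and q_root: "AE t in M. 0 < q t \<and> deriv f (q t) = - (beta + L t) / lam"
    and le: "objective_pos L lam M p + ennreal lam * objective_neg M q
      \<le> objective_pos L lam M q + ennreal lam * objective_neg M p"
    and finite: "objective_pos L lam M q < \<infinity>"
  shows "AE t in M. p t = q t"
proof (rule ccontr)
  let ?u = "\<lambda>t. ennreal (split_integrand L lam beta q p t)"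
  let ?v = "\<lambda>t. ennreal (split_integrand L lam beta p q t)"
  note int_u = nn_integral_split_integrand[OF L less_imp_le[OF lam] q p]
  note int_v = nn_integral_split_integrand[OF L less_imp_le[OF lam] p q]
  assume not_AE: "\<not> (AE t in M. p t = q t)"
  have imp: "AE t in M. ?v t \<le> ?u t \<longrightarrow> p t = q t"
    using q_root
  proof eventually_elim
    case (elim t)
    have "0 \<le> split_integrand L lam beta q p t"
      using lam L(2) p(2) q(2) by (intro split_integrand_nonneg) auto
    moreover have "p t \<noteq> q t \<Longrightarrow> split_integrand L lam beta q p t < split_integrand L lam beta p q t"
      using elim lam p(2)[of t]
      by (intro split_integrand_le_at_root(2)[where p = p and q = q and t = t]) auto
    ultimately show ?case by fastforce
  qed
  have "\<not> (AE t in M. ?v t \<le> ?u t)"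
  proof
    assume "AE t in M. ?v t \<le> ?u t"
    with imp have "AE t in M. p t = q t" by eventually_elim blast
    with not_AE show False by contradiction
  qed
  moreover have "AE t in M. ?u t \<le> ?v t"
    using q_root
    by eventually_elim (auto intro!: ennreal_leI split_integrand_le_at_root lam p(2))
  moreover have "integral\<^sup>N M ?u \<noteq> \<infinity>"
    using finite objective_neg_finite[OF M p] unfolding int_u
    by (simp add: ennreal_mult_eq_top_iff less_top)
  moreover have "?u \<in> borel_measurable M" "?v \<in> borel_measurable M"
    using borel_measurable_split_integrand[OF L(1) p(1,2) q(1,2)]
      borel_measurable_split_integrand[OF L(1) q(1,2) p(1,2)]
    by measurable
  ultimately have "integral\<^sup>N M ?u < integral\<^sup>N M ?v"
    by (intro nn_integral_less) auto
  with le show False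
    unfolding int_u int_v
    by (simp add: ennreal_add_left_cancel_less add.commute[of _ "ennreal \<bar>beta\<bar>"])
qed

lemma borel_measurable_deriv_inverse:
  assumes S: "S \<in> sets M" and a: "a \<in> borel_measurable M"
    and g: "\<And>t. t \<in> S \<Longrightarrow> 0 < g t \<and> deriv f (g t) = a t"
  shows "(\<lambda>t. if t \<in> S then g t else 0) \<in> borel_measurable M"
  unfolding borel_measurable_iff_greater
proof
  fix c :: real
  have S_space: "S \<subseteq> space M" using S sets.sets_into_space by blast
  consider "c < 0" | "c = 0" | "0 < c" by linarith
  then show "{t \<in> space M. c < (if t \<in> S then g t else 0)} \<in> sets M"
  proof cases
    case 1
    then have "{t \<in> space M. c < (if t \<in> S then g t else 0)} = space M"
      using g by (force intro: order.strict_trans)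
    then show ?thesis by simp
  next
    case 2
    then have "{t \<in> space M. c < (if t \<in> S then g t else 0)} = S"
      using g S_space by auto
    then show ?thesis using S by simp
  next
    case 3
    then have "{t \<in> space M. c < (if t \<in> S then g t else 0)} = S \<inter> {t \<in> space M. deriv f c < a t}"
      using g S_space deriv_less_iff[OF 3] by force
    moreover have "{t \<in> space M. deriv f c < a t} \<in> sets M"
      using a by measurable
    ultimately show ?thesis using S by auto
  qed
qed

lemma exists_density_objective_pos_finite:
  assumes M: "prob_space M" and L: "L \<in> borel_measurable M"
  obtains p where "p \<in> borel_measurable M" "\<And>t. 0 \<le> p t" "(\<integral>\<^sup>+ t. ennreal (p t) \<partial>M) = 1"
    "objective_pos L lam M p < \<infinity>"
proof -
  interpret prob_space M by fact
  obtain n :: nat where A: "{t \<in> space M. L t \<le> real n} \<notin> null_sets M" (is "?A \<notin> _")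
    using exists_sublevel_set_not_null[OF M L] .
  have A_sets: "?A \<in> sets M"
    using L by measurable
  define \<mu> where "\<mu> = measure M ?A"
  have \<mu>_pos: "0 < \<mu>"
    using A A_sets by (simp add: \<mu>_def emeasure_eq_measure null_sets_def zero_less_measure_iff)
  define p where "p t = indicator ?A t / \<mu>" for t
  have "ennreal (p t) = ennreal (1 / \<mu>) * indicator ?A t" for t
    by (simp add: p_def indicator_def)
  then have "(\<integral>\<^sup>+ t. ennreal (p t) \<partial>M) = ennreal (1 / \<mu>) * emeasure M ?A"
    using A_sets by (simp add: nn_integral_cmult_indicator)
  also have "\<dots> = 1"
    using \<mu>_pos by (simp add: \<mu>_def emeasure_eq_measure flip: ennreal_mult)
  finally have p_int: "(\<integral>\<^sup>+ t. ennreal (p t) \<partial>M) = 1" .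
  have pL: "p t * L t \<le> real n / \<mu>" for t
    using \<mu>_pos by (cases "t \<in> ?A") (auto simp: p_def divide_right_mono)
  have fp: "f (p t) \<le> max (f 0) (f (1 / \<mu>))" for t
    by (cases "t \<in> ?A") (auto simp: p_def)
  have "(\<integral>\<^sup>+ t. ennreal (p t * L t) \<partial>M) < \<infinity>" "(\<integral>\<^sup>+ t. ennreal (f (p t)) \<partial>M) < \<infinity>"
    using nn_integral_bounded_finite[OF M, where u = "\<lambda>t. p t * L t", OF pL]
      nn_integral_bounded_finite[OF M, where u = "\<lambda>t. f (p t)", OF fp]
    by simp_all
  then have "objective_pos L lam M p < \<infinity>"
    unfolding objective_pos_def by (simp add: ennreal_mult_less_top)
  moreover have "p \<in> borel_measurable M" "0 \<le> p t" for t
    unfolding p_def using A_sets \<mu>_pos by auto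
  ultimately show ?thesis using p_int that by blast
qed

definition regularized_risk :: "('a \<Rightarrow> real) \<Rightarrow> real \<Rightarrow> 'a measure \<Rightarrow> 'a measure \<Rightarrow> ereal"
  where "regularized_risk L lam Q P = enn2ereal (\<integral>\<^sup>+ t. ennreal (L t) \<partial>P) + ereal lam * fdiv f P Q"

lemma regularized_risk_eq_objective:
  assumes Q: "prob_space Q" and P: "P \<in> DeltaQ Q" and lam: "0 < lam"
    and L: "L \<in> borel_measurable Q"
  defines "p \<equiv> \<lambda>t. enn2real (RN_deriv Q P t)"
  shows "regularized_risk L lam Q P
    = enn2ereal (objective_pos L lam Q p) - enn2ereal (ennreal lam * objective_neg Q p)"
proof -
  have p_eq: "enn2real (RN_deriv Q P t) = p t" for t
    by (simp add: p_def)
  note p = DeltaQ_RN_density[OF Q P, unfolded p_eq]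
  have "(\<integral>\<^sup>+ t. ennreal (L t) \<partial>P) = (\<integral>\<^sup>+ t. ennreal (L t) \<partial>density Q (\<lambda>t. ennreal (p t)))"
    using p(1) by simp
  also have "\<dots> = (\<integral>\<^sup>+ t. ennreal (p t * L t) \<partial>Q)"
    using p(2,3) L by (simp add: nn_integral_density ennreal_mult')
  moreover have "objective_neg Q p < \<infinity>"
    by (rule objective_neg_finite[OF Q p(2-4)])
  ultimately show ?thesis
    using enn2ereal_add_scaled_diff[of lam "objective_neg Q p"] lam
    unfolding regularized_risk_def fdiv_def objective_pos_def objective_neg_def p_eq
    by simp
qed

lemma regularized_risk_le_iff:
  assumes Q: "prob_space Q" and P: "P \<in> DeltaQ Q" "P' \<in> DeltaQ Q" and lam: "0 < lam"
    and L: "L \<in> borel_measurable Q"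
  defines "p \<equiv> \<lambda>t. enn2real (RN_deriv Q P t)" and "p' \<equiv> \<lambda>t. enn2real (RN_deriv Q P' t)"
  shows "regularized_risk L lam Q P \<le> regularized_risk L lam Q P' \<longleftrightarrow>
    objective_pos L lam Q p + ennreal lam * objective_neg Q p'
      \<le> objective_pos L lam Q p' + ennreal lam * objective_neg Q p"
proof -
  have "ennreal lam * objective_neg Q p < \<infinity>" "ennreal lam * objective_neg Q p' < \<infinity>"
    using objective_neg_finite[OF Q DeltaQ_RN_density(2-4)[OF Q P(1)]]
      objective_neg_finite[OF Q DeltaQ_RN_density(2-4)[OF Q P(2)]]
    by (simp_all add: p_def p'_def ennreal_mult_less_top)
  then show ?thesis
    unfolding regularized_risk_eq_objective[OF Q P(1) lam L, folded p_def]
      regularized_risk_eq_objective[OF Q P(2) lam L, folded p'_def]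
    by (rule enn2ereal_diff_le_iff)
qed

lemma objective_pos_finite_at_root:
  assumes Q: "prob_space Q" and lam: "0 < lam"
    and L: "L \<in> borel_measurable Q" "\<And>t. 0 \<le> L t"
    and q: "q \<in> borel_measurable Q" "\<And>t. 0 \<le> q t" "(\<integral>\<^sup>+ t. ennreal (q t) \<partial>Q) = 1"
    and q_root: "AE t in Q. 0 < q t \<and> deriv f (q t) = - (beta + L t) / lam"
  shows "objective_pos L lam Q q < \<infinity>"
proof -
  obtain p where p: "p \<in> borel_measurable Q" "\<And>t. 0 \<le> p t" "(\<integral>\<^sup>+ t. ennreal (p t) \<partial>Q) = 1"
    "objective_pos L lam Q p < \<infinity>"
    using exists_density_objective_pos_finite[OF Q L(1), where lam = lam] by blast
  have "objective_pos L lam Q q + ennreal lam * objective_neg Q p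
      \<le> objective_pos L lam Q p + ennreal lam * objective_neg Q q"
    by (rule objective_le_at_root[OF lam L p(1-3) q q_root])
  also have "\<dots> < \<infinity>"
    using p(4) objective_neg_finite[OF Q q] by (simp add: ennreal_mult_less_top)
  finally show ?thesis by simp
qed

lemma density_at_root_unique_minimizer:
  assumes Q: "prob_space Q" and lam: "0 < lam"
    and L: "L \<in> borel_measurable Q" "\<And>t. 0 \<le> L t"
    and q: "q \<in> borel_measurable Q" "\<And>t. 0 \<le> q t" "(\<integral>\<^sup>+ t. ennreal (q t) \<partial>Q) = 1"
    and q_root: "AE t in Q. 0 < q t \<and> deriv f (q t) = - (beta + L t) / lam"
  defines "Pstar \<equiv> density Q (\<lambda>t. ennreal (q t))"
  shows "Pstar \<in> DeltaQ Q"
    and "P \<in> DeltaQ Q \<Longrightarrow> regularized_risk L lam Q Pstar \<le> regularized_risk L lam Q P"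
    and "P \<in> DeltaQ Q \<Longrightarrow> regularized_risk L lam Q P \<le> regularized_risk L lam Q Pstar \<Longrightarrow> P = Pstar"
proof -
  show Pstar: "Pstar \<in> DeltaQ Q"
    unfolding Pstar_def using q(1,3) by (rule density_in_DeltaQ)
  define ps where "ps t = enn2real (RN_deriv Q Pstar t)" for t
  note ps = DeltaQ_RN_density[OF Q Pstar, folded ps_def]
  have "AE t in Q. ps t = q t"
    unfolding ps_def Pstar_def using Q q(1,2)
    by (intro AE_enn2real_RN_deriv_density prob_space_imp_sigma_finite)
  then have ps_root: "AE t in Q. 0 < ps t \<and> deriv f (ps t) = - (beta + L t) / lam"
    using q_root by eventually_elim simp
  show "regularized_risk L lam Q Pstar \<le> regularized_risk L lam Q P" if P: "P \<in> DeltaQ Q"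
    unfolding regularized_risk_le_iff[OF Q Pstar P lam L(1), folded ps_def]
    using objective_le_at_root[OF lam L DeltaQ_RN_density(2-4)[OF Q P] ps(2-4) ps_root] .
  show "P = Pstar" if P: "P \<in> DeltaQ Q"
    and le: "regularized_risk L lam Q P \<le> regularized_risk L lam Q Pstar"
  proof -
    define p where "p t = enn2real (RN_deriv Q P t)" for t
    note p = DeltaQ_RN_density[OF Q P, folded p_def]
    have "AE t in Q. p t = ps t"
      using le unfolding regularized_risk_le_iff[OF Q P Pstar lam L(1), folded p_def ps_def]
      by (intro objective_eq_at_root_imp_AE_eq[OF Q lam L p(2-4) ps(2-4) ps_root]
          objective_pos_finite_at_root[OF Q lam L ps(2-4) ps_root])
    then have "density Q (\<lambda>t. ennreal (p t)) = density Q (\<lambda>t. ennreal (ps t))"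
      using p(2) ps(2) by (intro density_cong) (auto elim: eventually_mono)
    then show ?thesis using p(1) ps(1) by simp
  qed
qed

lemma fdot_inv_density:
  fixes Q :: "'m::second_countable_topology measure"
  assumes Q_sets: "sets Q = sets (restrict_space borel Ms)" and a: "a \<in> borel_measurable Q"
    and range: "\<And>t. t \<in> msupp Q \<Longrightarrow> a t \<in> deriv f ` {0<..}"
    and pos: "\<And>t. t \<in> msupp Q \<Longrightarrow> 0 < fdot_inv f (a t)"
  defines "q \<equiv> \<lambda>t. if t \<in> msupp Q then fdot_inv f (a t) else 0"
  shows "q \<in> borel_measurable Q" and "\<And>t. 0 \<le> q t"
    and "AE t in Q. 0 < q t \<and> deriv f (q t) = a t"
proof -
  have root: "0 < fdot_inv f (a t) \<and> deriv f (fdot_inv f (a t)) = a t" if "t \<in> msupp Q" for t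
    using pos[OF that] f_inv_into_f[OF range[OF that]] by (simp add: fdot_inv_def)
  show "q \<in> borel_measurable Q"
    unfolding q_def using msupp_in_sets[OF Q_sets] a root by (rule borel_measurable_deriv_inverse)
  show "0 \<le> q t" for t
    using root by (simp add: q_def less_imp_le)
  show "AE t in Q. 0 < q t \<and> deriv f (q t) = a t"
    using AE_in_msupp[OF Q_sets] by eventually_elim (simp add: q_def root)
qed

end

theorem theorem1:
  fixes Ms :: "'m::euclidean_space set"
    and h :: "'m \<Rightarrow> 'x \<Rightarrow> 'y"
    and ell :: "'y \<Rightarrow> 'y \<Rightarrow> real"
    and z :: "('x \<times> 'y) list"
    and f :: "real \<Rightarrow> real"
    and Q :: "'m measure"
    and lam :: real
    and beta :: real
  assumes ell_nonneg: "\<And>y y'. ell y y' \<ge> 0"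
    and ell_refl: "\<And>y. ell y y = 0"
    and f_convex: "convex_on {0..} f"
    and f_one: "f 1 = 0"
    and f_zero: "(f \<longlongrightarrow> f 0) (at_right 0)"
    and Q_sets: "sets Q = sets (restrict_space borel Ms)"
    and Q_prob: "prob_space Q"
    and lam_pos: "lam > 0"
    and L_meas: "emp_risk ell h z \<in> borel_measurable Q"
    \<comment> \<open>assumption (a)\<close>
    and a_strict: "strict_convex_on {0..} f"
    and a_diff: "\<And>x. x > 0 \<Longrightarrow> f differentiable (at x)"
    \<comment> \<open>assumption (b)\<close>
    and b_range: "\<And>theta. theta \<in> msupp Q \<Longrightarrow>
                    - (beta + emp_risk ell h z theta) / lam \<in> deriv f ` {0<..}"
    and b_pos: "\<And>theta. theta \<in> msupp Q \<Longrightarrow>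
                    0 < fdot_inv f (- (beta + emp_risk ell h z theta) / lam)"
    and b_int: "(\<integral>\<^sup>+ theta. ennreal (fdot_inv f (- (beta + emp_risk ell h z theta) / lam))
                    * indicator (msupp Q) theta \<partial>Q) = 1"
  shows "\<exists>Pstar.
     \<comment> \<open>(i) unique solution of the regularized problem\<close>
     (Pstar \<in> DeltaQ Q
      \<and> (\<forall>P \<in> DeltaQ Q. exp_risk ell h z Pstar + ereal lam * fdiv f Pstar Q
                        \<le> exp_risk ell h z P + ereal lam * fdiv f P Q)
      \<and> (\<forall>P \<in> DeltaQ Q. exp_risk ell h z P + ereal lam * fdiv f P Q
                        \<le> exp_risk ell h z Pstar + ereal lam * fdiv f Pstar Q \<longrightarrow> P = Pstar))
     \<and> (\<exists>d \<in> borel_measurable Q. Pstar = density Q d \<and>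
          (\<forall>theta \<in> msupp Q.
             d theta = ennreal (fdot_inv f (- (beta + emp_risk ell h z theta) / lam))))
     \<comment> \<open>(ii) under separability (c), Pstar also uniquely solves the constrained problem\<close>
     \<and> ((\<exists>c > 0. \<exists>M1 M2. M1 \<subseteq> Ms \<and> M2 \<subseteq> Ms \<and> M1 \<in> sets Q \<and> M2 \<in> sets Q
            \<and> emeasure Q M1 > 0 \<and> emeasure Q M2 > 0
            \<and> (\<forall>t1 \<in> M1. \<forall>t2 \<in> M2. emp_risk ell h z t1 < c \<and> c < emp_risk ell h z t2))
        \<longrightarrow> (\<forall>eta::real. eta \<ge> 0 \<longrightarrow> fdiv f Pstar Q = ereal eta \<longrightarrow>
              fdiv f Pstar Q \<le> ereal eta
              \<and> (\<forall>P \<in> DeltaQ Q. fdiv f P Q \<le> ereal eta \<longrightarrow>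
                    exp_risk ell h z Pstar \<le> exp_risk ell h z P)
              \<and> (\<forall>P \<in> DeltaQ Q. fdiv f P Q \<le> ereal eta \<longrightarrow>
                    exp_risk ell h z P \<le> exp_risk ell h z Pstar \<longrightarrow> P = Pstar)))"
proof -
  interpret strictly_convex_generator f
    using a_strict a_diff by unfold_locales
  define L where "L = emp_risk ell h z"
  define q where "q t = (if t \<in> msupp Q then fdot_inv f (- (beta + L t) / lam) else 0)" for t
  have L_nonneg: "0 \<le> L t" for t
    unfolding L_def emp_risk_def using ell_nonneg by (simp add: sum_nonneg)
  have "(\<lambda>t. - (beta + emp_risk ell h z t) / lam) \<in> borel_measurable Q"
    using L_meas by measurable
  from fdot_inv_density[OF Q_sets this b_range b_pos]
  have q: "q \<in> borel_measurable Q" "\<And>t. 0 \<le> q t"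
    "AE t in Q. 0 < q t \<and> deriv f (q t) = - (beta + L t) / lam"
    unfolding q_def[abs_def] L_def by auto
  have "ennreal (q t) = ennreal (fdot_inv f (- (beta + L t) / lam)) * indicator (msupp Q) t" for t
    by (simp add: q_def)
  then have q_int: "(\<integral>\<^sup>+ t. ennreal (q t) \<partial>Q) = 1"
    using b_int by (simp add: L_def)
  define Pstar where "Pstar = density Q (\<lambda>t. ennreal (q t))"
  note minimizer = density_at_root_unique_minimizer[OF Q_prob lam_pos L_meas[folded L_def] L_nonneg
      q(1,2) q_int q(3), folded Pstar_def, unfolded regularized_risk_def L_def, folded exp_risk_def]
  have "\<exists>d \<in> borel_measurable Q. Pstar = density Q d \<and>
      (\<forall>theta \<in> msupp Q. d theta = ennreal (fdot_inv f (- (beta + emp_risk ell h z theta) / lam)))"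
  proof (rule bexI[of _ "\<lambda>t. ennreal (q t)"])
    show "(\<lambda>t. ennreal (q t)) \<in> borel_measurable Q" using q(1) by simp
  qed (simp add: Pstar_def q_def L_def)
  moreover note penalized_minimizer_solves_constrained[where R = "exp_risk ell h z"
      and D = "\<lambda>P. fdiv f P Q" and A = "DeltaQ Q", OF lam_pos _ minimizer(2,3)]
  ultimately show ?thesis
    using minimizer by (intro exI[of _ Pstar]) auto
qed

end
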